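(* Let $G$ be a second countable, locally compact, Hausdorff groupoid with a Haar system, let $q\colon G^{(0)}\to G\backslash G^{(0)}$ be the orbit map, and define $G^{(0)}_{\le n}=\{u:|[u]|\le n\}$, $G^{(0)}_{\ge n}=\{u:|[u]|\ge n\}$, $G^{(0)}_n=\{u:|[u]|=n\}$. Then: (a) for $n\ge0$, $G^{(0)}_{\le n}$ is a closed invariant subset of $G^{(0)}$; (b) for $n\ge0$, $G^{(0)}_{\ge n}$ is an open invariant subset of $G^{(0)}$; (c) for $n\ge1$, $G^{(0)}_n$ is invariant and locally closed, hence locally compact; (d) for $n\ge1$, $q(G^{(0)}_n)$ is locally closed in $G\backslash G^{(0)}$ and is Hausdorff in the relative topology.
   Context: $G$ acts on $G^{(0)}$ by $\gamma\cdot s(\gamma)=r(\gamma)$; $[u]=r(s^{-1}(u))$ is the orbit of $u$ and $|[u]|$ its cardinality. $G\backslash G^{(0)}$ is the orbit space with the quotient topology. A subset $F$ is invariant if $F=r(s^{-1}(F))$. *)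

theory Defs
  imports "HOL-Analysis.Analysis" "HOL-Probability.Probability"
begin

text \<open>A groupoid whose set of arrows is the whole type 'g. r = range, s = source,
  m = (partial) multiplication, only meaningful on composable pairs (s x = r y),
  i = inversion. The unit space is range r.\<close>

definition groupoid :: "('g \<Rightarrow> 'g) \<Rightarrow> ('g \<Rightarrow> 'g) \<Rightarrow> ('g \<Rightarrow> 'g \<Rightarrow> 'g) \<Rightarrow> ('g \<Rightarrow> 'g) \<Rightarrow> bool" where
  "groupoid r s m i \<longleftrightarrow>
     (\<forall>x. r (r x) = r x \<and> s (r x) = r x \<and> r (s x) = s x \<and> s (s x) = s x) \<and>
     (\<forall>x y. s x = r y \<longrightarrow> r (m x y) = r x \<and> s (m x y) = s y) \<and>
     (\<forall>x y z. s x = r y \<and> s y = r z \<longrightarrow> m (m x y) z = m x (m y z)) \<and>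
     (\<forall>x. m (r x) x = x \<and> m x (s x) = x) \<and>
     (\<forall>x. r (i x) = s x \<and> s (i x) = r x \<and> m x (i x) = r x \<and> m (i x) x = s x)"

definition topological_groupoid ::
  "('g::topological_space \<Rightarrow> 'g) \<Rightarrow> ('g \<Rightarrow> 'g) \<Rightarrow> ('g \<Rightarrow> 'g \<Rightarrow> 'g) \<Rightarrow> ('g \<Rightarrow> 'g) \<Rightarrow> bool" where
  "topological_groupoid r s m i \<longleftrightarrow>
     groupoid r s m i \<and> continuous_on UNIV r \<and> continuous_on UNIV s \<and> continuous_on UNIV i \<and>
     continuous_on {(x, y). s x = r y} (\<lambda>(x, y). m x y)"

text \<open>Haar system: a family of Radon measures lambda u (u a unit) on the arrows, with
  support exactly G^u = r^-1(u), continuous (u maps to the integral of f is continuous for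
  f in C_c(G)), and left invariant (x lambda^{s x} = lambda^{r x}).\<close>

definition haar_system ::
  "('g::topological_space \<Rightarrow> 'g) \<Rightarrow> ('g \<Rightarrow> 'g) \<Rightarrow> ('g \<Rightarrow> 'g \<Rightarrow> 'g) \<Rightarrow> ('g \<Rightarrow> 'g measure) \<Rightarrow> bool" where
  "haar_system r s m lam \<longleftrightarrow>
     (\<forall>u\<in>range r.
        sets (lam u) = sets borel \<and>
        emeasure (lam u) (- (r -` {u})) = 0 \<and>
        (\<forall>U. open U \<and> U \<inter> r -` {u} \<noteq> {} \<longrightarrow> emeasure (lam u) U > 0) \<and>
        (\<forall>K. compact K \<longrightarrow> emeasure (lam u) K < \<infinity>)) \<and>
     (\<forall>f :: 'g \<Rightarrow> real. continuous_on UNIV f \<and> (\<exists>K. compact K \<and> (\<forall>x. x \<notin> K \<longrightarrow> f x = 0))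
        \<longrightarrow> continuous_on (range r) (\<lambda>u. integral\<^sup>L (lam u) f)) \<and>
     (\<forall>x. \<forall>A\<in>sets borel.
        emeasure (lam (r x)) A = emeasure (lam (s x)) {y. r y = s x \<and> m x y \<in> A})"

definition orbit :: "('g \<Rightarrow> 'g) \<Rightarrow> ('g \<Rightarrow> 'g) \<Rightarrow> 'g \<Rightarrow> 'g set" where
  "orbit r s u = r ` (s -` {u})"

definition invariant :: "('g \<Rightarrow> 'g) \<Rightarrow> ('g \<Rightarrow> 'g) \<Rightarrow> 'g set \<Rightarrow> bool" where
  "invariant r s F \<longleftrightarrow> F = r ` (s -` F)"

definition units_le :: "('g \<Rightarrow> 'g) \<Rightarrow> ('g \<Rightarrow> 'g) \<Rightarrow> nat \<Rightarrow> 'g set" where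
  "units_le r s n = {u \<in> range r. finite (orbit r s u) \<and> card (orbit r s u) \<le> n}"

definition units_ge :: "('g \<Rightarrow> 'g) \<Rightarrow> ('g \<Rightarrow> 'g) \<Rightarrow> nat \<Rightarrow> 'g set" where
  "units_ge r s n = {u \<in> range r. infinite (orbit r s u) \<or> card (orbit r s u) \<ge> n}"

definition units_eq :: "('g \<Rightarrow> 'g) \<Rightarrow> ('g \<Rightarrow> 'g) \<Rightarrow> nat \<Rightarrow> 'g set" where
  "units_eq r s n = {u \<in> range r. finite (orbit r s u) \<and> card (orbit r s u) = n}"

definition locally_closedin :: "'a topology \<Rightarrow> 'a set \<Rightarrow> bool" where
  "locally_closedin X S \<longleftrightarrow> (\<exists>U C. openin X U \<and> closedin X C \<and> S = U \<inter> C)"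

end

(* The Haar system makes the range map r open onto the unit space.  Hence, given
   disjoint open neighbourhoods A_1, ..., A_n of n points of the orbit [u], the units
   whose orbit meets every A_j form an open neighbourhood of u, and all those orbits
   have at least n points: the orbit cardinality is lower semicontinuous, which gives
   (b), and (a) and (c) by complement and intersection.  For (d), the sets in question
   are saturated, so the orbit map restricts to a quotient map of G_n onto its image.
   If moreover |[u]| = n and [u] is contained in an open set U, then a nearby orbit of
   size n has exactly one point in each of n small disjoint neighbourhoods of the points
   of [u], so lies in U; hence two distinct orbits of size n, separated by disjoint open
   sets in G, are separated by disjoint saturated open subsets of G_n. *)

theory Submission
  imports Defs
begin

lemma card_le_card_if_meets_disjoint_family:
  assumes "finite S" "disjoint_family_on N F" "\<And>v. v \<in> F \<Longrightarrow> S \<inter> N v \<noteq> {}"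
  shows "card F \<le> card S"
proof -
  have "\<forall>v\<in>F. \<exists>z. z \<in> S \<inter> N v"
    using assms(3) by blast
  then obtain f where f: "\<And>v. v \<in> F \<Longrightarrow> f v \<in> S \<inter> N v"
    using bchoice[of F "\<lambda>v z. z \<in> S \<inter> N v"] by auto
  have "inj_on f F"
    using f assms(2) by (fastforce simp: inj_on_def disjoint_family_on_def)
  then show ?thesis
    using card_inj_on_le f assms(1) by blast
qed

lemma subset_Union_if_meets_disjoint_family:
  assumes "finite S" "card S \<le> card F" "disjoint_family_on N F" "\<And>v. v \<in> F \<Longrightarrow> S \<inter> N v \<noteq> {}"
  shows "S \<subseteq> \<Union> (N ` F)"
proof -
  let ?S' = "S \<inter> \<Union> (N ` F)"
  have "card F \<le> card ?S'"
    using assms(1,3,4) by (intro card_le_card_if_meets_disjoint_family) auto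
  moreover have "card ?S' \<le> card S"
    using assms(1) by (simp add: card_mono)
  ultimately have "card ?S' = card S"
    using assms(2) by linarith
  then show ?thesis
    using card_subset_eq[OF assms(1)] by blast
qed

lemma finite_disjoint_open_nbhds:
  fixes F :: "'a::t2_space set"
  assumes "finite F"
  obtains N where "\<And>v. v \<in> F \<Longrightarrow> open (N v) \<and> v \<in> N v" "disjoint_family_on N F"
proof -
  obtain A B :: "'a \<Rightarrow> 'a \<Rightarrow> 'a set" where AB: "\<And>v w. v \<noteq> w \<Longrightarrow>
      open (A v w) \<and> open (B v w) \<and> v \<in> A v w \<and> w \<in> B v w \<and> A v w \<inter> B v w = {}"
    using separation_t2 by metis
  define N where "N v = (\<Inter>w \<in> F - {v}. A v w \<inter> B w v)" for v
  show thesis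
  proof
    show "open (N v) \<and> v \<in> N v" if "v \<in> F" for v
    proof
      show "open (N v)"
        using AB assms by (auto simp: N_def intro!: open_INT)
      have "v \<in> A v w \<inter> B w v" if "w \<noteq> v" for w
        using AB[of v w] AB[of w v] that by auto
      then show "v \<in> N v"
        by (simp add: N_def)
    qed
    have "N v \<inter> N w \<subseteq> A v w \<inter> B v w" if "v \<in> F" "w \<in> F" "v \<noteq> w" for v w
      using that by (auto simp: N_def)
    then show "disjoint_family_on N F"
      using AB by (fastforce simp: disjoint_family_on_def)
  qed
qed

lemma separation_t2_finite:
  fixes S T :: "'a::t2_space set"
  assumes "finite S" "finite T" "S \<inter> T = {}"
  obtains U V where "open U" "open V" "S \<subseteq> U" "T \<subseteq> V" "U \<inter> V = {}"
proof -
  obtain N where N: "\<And>v. v \<in> S \<union> T \<Longrightarrow> open (N v) \<and> v \<in> N v" "disjoint_family_on N (S \<union> T)"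
    using finite_disjoint_open_nbhds[of "S \<union> T"] assms(1,2) by blast
  have "N a \<inter> N b = {}" if "a \<in> S" "b \<in> T" for a b
    using disjoint_family_onD[OF N(2)] assms(3) that by blast
  then have "\<Union> (N ` S) \<inter> \<Union> (N ` T) = {}"
    by blast
  moreover have "open (\<Union> (N ` S))" "open (\<Union> (N ` T))"
    using N(1) by auto
  moreover have "S \<subseteq> \<Union> (N ` S)" "T \<subseteq> \<Union> (N ` T)"
    using N(1) by auto
  ultimately show thesis
    using that by blast
qed

lemma locally_compact_Int_closed:
  assumes "locally compact S" "closed T"
  shows "locally compact (S \<inter> T)"
  unfolding locally_def
proof (intro allI impI)
  fix W x assume "openin (top_of_set (S \<inter> T)) W \<and> x \<in> W"
  then obtain N where N: "open N" "W = S \<inter> T \<inter> N" "x \<in> W"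
    by (auto simp: openin_open)
  then obtain U K where UK: "openin (top_of_set S) U" "compact K" "x \<in> U" "U \<subseteq> K" "K \<subseteq> S \<inter> N"
    using assms(1)[unfolded locally_def, rule_format, of "S \<inter> N" x] by (auto simp: openin_open_Int)
  have "openin (top_of_set (S \<inter> T)) (U \<inter> T)"
    using UK(1) by (auto simp: openin_open)
  moreover have "compact (K \<inter> T)"
    using UK(2) assms(2) by (rule compact_Int_closed)
  ultimately show "\<exists>U V. openin (top_of_set (S \<inter> T)) U \<and> compact V \<and> x \<in> U \<and> U \<subseteq> V \<and> V \<subseteq> W"
    using UK N by (intro exI[of _ "U \<inter> T"] exI[of _ "K \<inter> T"]) auto
qed

lemma compactly_supported_bump:
  fixes g :: "'a::t2_space"
  assumes "locally compact (UNIV :: 'a set)" "open W" "g \<in> W"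
  obtains h :: "'a \<Rightarrow> real" and K where "continuous_on UNIV h" "compact K" "K \<subseteq> W"
    "\<And>x. x \<notin> K \<Longrightarrow> h x = 0" "\<And>x. h x \<in> {0..1}" "h g = 1"
proof -
  obtain V K where VK: "open V" "compact K" "g \<in> V" "V \<subseteq> K" "K \<subseteq> W"
    using assms unfolding locally_def by (metis open_openin open_UNIV subtopology_UNIV)
  have "locally_compact_space (euclidean :: 'a topology)"
    using assms(1) unfolding locally_def locally_compact_space_def
    by (metis open_openin open_UNIV subtopology_UNIV compactin_euclidean_iff UNIV_I)
  moreover have "Hausdorff_space (euclidean :: 'a topology)"
    by (simp add: Hausdorff_space_def disjnt_def separation_t2)
  ultimately have "completely_regular_space (euclidean :: 'a topology)"
    using locally_compact_regular_imp_completely_regular_space by blast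
  moreover have "closedin euclidean (- V)" "disjnt {g} (- V)"
    using VK by (auto simp: closed_Compl disjnt_def)
  ultimately obtain f where f: "continuous_map euclidean (top_of_set {0..1::real}) f"
    "f ` (- V) \<subseteq> {0}" "f ` {g} \<subseteq> {1}"
    using Urysohn_completely_regular_compact_closed[of 0 1 euclidean "{g}" "- V"] by auto
  then show thesis
    using VK by (intro that[of f K]) (auto simp: continuous_map_in_subtopology)
qed

locale groupoid_structure =
  fixes r s :: "'g \<Rightarrow> 'g" and m :: "'g \<Rightarrow> 'g \<Rightarrow> 'g" and i :: "'g \<Rightarrow> 'g"
  assumes groupoid: "groupoid r s m i"
begin

lemma r_r [simp]: "r (r x) = r x"
  and s_r [simp]: "s (r x) = r x"
  and r_s [simp]: "r (s x) = s x"
  and r_i [simp]: "r (i x) = s x"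
  and s_i [simp]: "s (i x) = r x"
  using groupoid by (simp_all add: groupoid_def)

lemma r_m: "s x = r y \<Longrightarrow> r (m x y) = r x"
  and s_m: "s x = r y \<Longrightarrow> s (m x y) = s y"
  using groupoid by (simp_all add: groupoid_def)

lemma mem_range_r_iff: "u \<in> range r \<longleftrightarrow> r u = u"
  by (metis r_r rangeE rangeI)

lemma mem_orbit_self: "u \<in> range r \<Longrightarrow> u \<in> orbit r s u"
  unfolding orbit_def by (metis image_eqI mem_range_r_iff s_r vimage_singleton_eq)

lemma orbit_r_eq_orbit_s: "orbit r s (r g) = orbit r s (s g)"
  unfolding orbit_def
proof safe
  fix d assume "s d = r g"
  then show "r d \<in> r ` s -` {s g}"
    using r_m s_m by (intro image_eqI[of _ _ "m d g"]) auto
next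
  fix d assume "s d = s g"
  then show "r d \<in> r ` s -` {r g}"
    using r_m s_m by (intro image_eqI[of _ _ "m d (i g)"]) auto
qed

lemma orbit_eq_if_mem:
  assumes "v \<in> orbit r s u"
  shows "orbit r s v = orbit r s u"
proof -
  obtain g where "v = r g" "u = s g"
    using assms by (auto simp: orbit_def)
  then show ?thesis
    by (simp add: orbit_r_eq_orbit_s)
qed

lemma r_image_s_vimage: "r ` (s -` A) = {w \<in> range r. orbit r s w \<inter> A \<noteq> {}}"
proof (intro equalityI subsetI)
  fix w assume "w \<in> r ` (s -` A)"
  then obtain g where g: "w = r g" "s g \<in> A"
    by blast
  moreover have "s g \<in> orbit r s (r g)"
    unfolding orbit_def by (rule image_eqI[of _ _ "i g"]) auto
  ultimately show "w \<in> {w \<in> range r. orbit r s w \<inter> A \<noteq> {}}"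
    by blast
next
  fix w assume "w \<in> {w \<in> range r. orbit r s w \<inter> A \<noteq> {}}"
  then obtain g where "r g \<in> A" "s g = w" "w \<in> range r"
    by (auto simp: orbit_def)
  then show "w \<in> r ` (s -` A)"
    by (intro image_eqI[of _ _ "i g"]) (auto simp: mem_range_r_iff)
qed

lemma invariant_orbit_property: "invariant r s {u \<in> range r. P (orbit r s u)}"
  unfolding invariant_def
proof (intro equalityI subsetI)
  fix u assume "u \<in> {u \<in> range r. P (orbit r s u)}"
  then show "u \<in> r ` s -` {u \<in> range r. P (orbit r s u)}"
    by (intro image_eqI[of _ _ u]) (auto simp: mem_range_r_iff, metis s_r)
next
  fix v assume "v \<in> r ` s -` {u \<in> range r. P (orbit r s u)}"
  then show "v \<in> {u \<in> range r. P (orbit r s u)}"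
    by (auto simp: orbit_r_eq_orbit_s)
qed

lemma invariant_units_le: "invariant r s (units_le r s n)"
  and invariant_units_ge: "invariant r s (units_ge r s n)"
  and invariant_units_eq: "invariant r s (units_eq r s n)"
  unfolding units_le_def units_ge_def units_eq_def by (rule invariant_orbit_property)+

lemma units_eq_eq_Int: "units_eq r s n = units_ge r s n \<inter> units_le r s n"
  by (auto simp: units_eq_def units_ge_def units_le_def)

end

locale lc_haar_groupoid =
  fixes r s :: "'g::t2_space \<Rightarrow> 'g" and m :: "'g \<Rightarrow> 'g \<Rightarrow> 'g" and i :: "'g \<Rightarrow> 'g"
    and lam :: "'g \<Rightarrow> 'g measure"
  assumes topological_groupoid: "topological_groupoid r s m i"
    and locally_compact: "locally compact (UNIV :: 'g set)"
    and haar_system: "haar_system r s m lam"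
begin

sublocale groupoid_structure r s m i
  using topological_groupoid by unfold_locales (simp add: topological_groupoid_def)

lemma continuous_on_r: "continuous_on UNIV r"
  and continuous_on_s: "continuous_on UNIV s"
  using topological_groupoid by (simp_all add: topological_groupoid_def)

lemma closed_range_r: "closed (range r)"
proof -
  have "closed {x. r x = id x}"
    using continuous_on_r by (intro closed_Collect_eq continuous_on_id) auto
  then show ?thesis
    by (simp add: mem_range_r_iff[symmetric] Collect_mem_eq)
qed

lemma
  assumes "u \<in> range r"
  shows sets_haar: "sets (lam u) = sets borel"
    and emeasure_haar_outside_fibre: "emeasure (lam u) (- r -` {u}) = 0"
    and emeasure_haar_pos: "open U \<Longrightarrow> U \<inter> r -` {u} \<noteq> {} \<Longrightarrow> emeasure (lam u) U > 0"
    and emeasure_haar_compact: "compact K \<Longrightarrow> emeasure (lam u) K < \<infinity>"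
  using conjunct1[OF haar_system[unfolded haar_system_def]] assms by auto

lemma continuous_on_haar_integral:
  fixes h :: "'g \<Rightarrow> real"
  assumes "continuous_on UNIV h" "compact K" "\<And>x. x \<notin> K \<Longrightarrow> h x = 0"
  shows "continuous_on (range r) (\<lambda>u. integral\<^sup>L (lam u) h)"
  using conjunct1[OF conjunct2[OF haar_system[unfolded haar_system_def]]] assms by blast

lemma haar_integral_pos:
  fixes h :: "'g \<Rightarrow> real"
  assumes "continuous_on UNIV h" "compact K" "\<And>x. x \<notin> K \<Longrightarrow> h x = 0" "\<And>x. h x \<in> {0..1}"
    and "h g > 0"
  shows "integral\<^sup>L (lam (r g)) h > 0"
proof -
  let ?u = "r g"
  have sets: "sets (lam ?u) = sets borel"
    by (simp add: sets_haar)
  have "emeasure (lam ?u) K < \<infinity>"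
    using assms(2) by (intro emeasure_haar_compact) auto
  then have "integrable (lam ?u) (indicator K :: 'g \<Rightarrow> real)"
    using sets assms(2) by (simp add: compact_imp_closed integrable_indicator_iff)
  moreover have "h \<in> borel_measurable (lam ?u)"
    using assms(1) by (simp add: measurable_cong_sets[OF sets refl] borel_measurable_continuous_onI)
  ultimately have int: "integrable (lam ?u) h"
    by (rule Bochner_Integration.integrable_bound) (use assms(3,4) in \<open>auto simp: indicator_def\<close>)
  have "integral\<^sup>L (lam ?u) h \<noteq> 0"
  proof
    assume "integral\<^sup>L (lam ?u) h = 0"
    then have "AE x in lam ?u. h x = 0"
      using integral_nonneg_eq_0_iff_AE[OF int] assms(4) by simp
    moreover have "open (h -` (- {0}))"
      using assms(1) by (simp add: continuous_on_open_vimage open_Compl)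
    ultimately have "emeasure (lam ?u) (h -` (- {0})) = 0"
      using sets AE_iff_measurable[of "h -` (- {0})" "lam ?u" "\<lambda>x. h x = 0"]
      by (auto simp: sets_eq_imp_space_eq[OF sets])
    moreover have "g \<in> h -` (- {0}) \<inter> r -` {?u}"
      using assms(5) by simp
    ultimately show False
      using emeasure_haar_pos[of ?u "h -` (- {0})"] \<open>open (h -` (- {0}))\<close> by auto
  qed
  moreover have "integral\<^sup>L (lam ?u) h \<ge> 0"
    using assms(4) by (simp add: integral_nonneg_AE)
  ultimately show ?thesis
    by simp
qed

lemma haar_integral_eq_0:
  fixes h :: "'g \<Rightarrow> real"
  assumes "u \<in> range r" "\<And>x. r x = u \<Longrightarrow> h x = 0"
  shows "integral\<^sup>L (lam u) h = 0"
proof (rule integral_eq_zero_AE)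
  have "closed (r -` {u})"
    using continuous_on_r by (simp add: continuous_on_closed_vimage)
  then have "- r -` {u} \<in> null_sets (lam u)"
    using assms(1) by (simp add: null_sets_def sets_haar emeasure_haar_outside_fibre open_Compl)
  then show "AE x in lam u. h x = 0"
    by (rule AE_I') (use assms(2) in auto)
qed

text \<open>A bump function supported in W has positive integral over the fibre through
  a point of W, hence, by continuity of the integral, over all nearby fibres, which
  therefore meet W.\<close>

lemma openin_r_image:
  assumes "open W"
  shows "openin (top_of_set (range r)) (r ` W)"
  unfolding openin_subopen[of _ "r ` W"]
proof
  fix u assume "u \<in> r ` W"
  then obtain g where g: "g \<in> W" "u = r g"
    by blast
  obtain h :: "'g \<Rightarrow> real" and K where h: "continuous_on UNIV h" "compact K" "K \<subseteq> W"
    "\<And>x. x \<notin> K \<Longrightarrow> h x = 0" "\<And>x. h x \<in> {0..1}" "h g = 1"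
    using compactly_supported_bump[OF locally_compact assms g(1)] by blast
  have "continuous_on (range r) (\<lambda>u. integral\<^sup>L (lam u) h)"
    using h(1,2,4) by (rule continuous_on_haar_integral)
  moreover have "integral\<^sup>L (lam u) h > 0"
    unfolding g(2) using h by (intro haar_integral_pos) auto
  ultimately obtain A where A: "open A" "u \<in> A"
    "\<And>v. v \<in> range r \<Longrightarrow> v \<in> A \<Longrightarrow> integral\<^sup>L (lam v) h > 0"
    using g(2) unfolding continuous_on_topological
    by (metis greaterThan_iff open_greaterThan rangeI)
  have "range r \<inter> A \<subseteq> r ` W"
  proof
    fix v assume v: "v \<in> range r \<inter> A"
    have "h x = 0" if "r x = v" "v \<notin> r ` W" for x
      using that h(3,4) by blast
    then show "v \<in> r ` W"
      using A(3)[of v] v haar_integral_eq_0[of v h] by auto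
  qed
  then show "\<exists>T. openin (top_of_set (range r)) T \<and> u \<in> T \<and> T \<subseteq> r ` W"
    using A(1,2) g(2) by (intro exI[of _ "range r \<inter> A"]) (auto simp: openin_open_Int)
qed

lemma openin_orbits_meeting:
  assumes "finite F" "\<And>v. v \<in> F \<Longrightarrow> open (A v)"
  shows "openin (top_of_set (range r)) {w \<in> range r. \<forall>v\<in>F. orbit r s w \<inter> A v \<noteq> {}}"
proof -
  have "openin (top_of_set (range r)) {w \<in> range r. orbit r s w \<inter> A v \<noteq> {}}" if "v \<in> F" for v
    using openin_r_image[of "s -` A v"] continuous_on_s assms(2)[OF that]
    by (simp add: r_image_s_vimage continuous_on_open_vimage)
  then have "openin (top_of_set (range r))
      ((\<Inter>v\<in>F. {w \<in> range r. orbit r s w \<inter> A v \<noteq> {}}) \<inter> topspace (top_of_set (range r)))"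
    using assms(1) by (intro openin_INT) auto
  moreover have "(\<Inter>v\<in>F. {w \<in> range r. orbit r s w \<inter> A v \<noteq> {}}) \<inter> range r
      = {w \<in> range r. \<forall>v\<in>F. orbit r s w \<inter> A v \<noteq> {}}"
    by blast
  ultimately show ?thesis
    by simp
qed

lemma openin_units_ge: "openin (top_of_set (range r)) (units_ge r s n)"
  unfolding openin_subopen[of _ "units_ge r s n"]
proof
  fix u assume u: "u \<in> units_ge r s n"
  obtain F where F: "finite F" "card F = n" "F \<subseteq> orbit r s u"
  proof (cases "finite (orbit r s u)")
    case True
    then show ?thesis
      using that u obtain_subset_with_card_n by (metis (lifting) mem_Collect_eq units_ge_def)
  next
    case False
    then show ?thesis
      using that infinite_arbitrarily_large by metis
  qed
  obtain A where A: "\<And>v. v \<in> F \<Longrightarrow> open (A v) \<and> v \<in> A v" "disjoint_family_on A F"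
    using finite_disjoint_open_nbhds[OF F(1)] by blast
  define T where "T = {w \<in> range r. \<forall>v\<in>F. orbit r s w \<inter> A v \<noteq> {}}"
  have "openin (top_of_set (range r)) T"
    unfolding T_def using F(1) A(1) by (intro openin_orbits_meeting) auto
  moreover have "u \<in> T"
    using u F(3) A(1) by (auto simp: T_def units_ge_def)
  moreover have "T \<subseteq> units_ge r s n"
    using card_le_card_if_meets_disjoint_family[OF _ A(2)] F(2)
    by (auto simp: T_def units_ge_def)
  ultimately show "\<exists>T. openin (top_of_set (range r)) T \<and> u \<in> T \<and> T \<subseteq> units_ge r s n"
    by blast
qed

lemma closedin_units_le: "closedin (top_of_set (range r)) (units_le r s n)"
proof -
  have "range r - units_le r s n = units_ge r s (Suc n)"
    by (auto simp: units_le_def units_ge_def)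
  then show ?thesis
    using openin_units_ge[of "Suc n"] by (simp add: closedin_def units_le_def)
qed

lemma locally_closedin_units_eq: "locally_closedin (top_of_set (range r)) (units_eq r s n)"
  unfolding locally_closedin_def units_eq_eq_Int using openin_units_ge closedin_units_le by blast

lemma locally_compact_units_eq: "locally compact (units_eq r s n)"
proof -
  obtain C where C: "closed C" "units_le r s n = range r \<inter> C"
    using closedin_units_le[of n] by (auto simp: closedin_closed)
  have "locally compact (range r)"
    using locally_compact_Int_closed[OF locally_compact closed_range_r] by simp
  then have "locally compact (units_ge r s n)"
    using openin_units_ge by (rule locally_open_subset)
  then have "locally compact (units_ge r s n \<inter> C)"
    using C(1) by (rule locally_compact_Int_closed)
  moreover have "units_ge r s n \<inter> C = units_eq r s n"
    using C(2) units_eq_eq_Int by (auto simp: units_ge_def)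
  ultimately show ?thesis
    by simp
qed

lemma openin_units_eq_orbit_subset:
  assumes "open U"
  shows "openin (top_of_set (units_eq r s n)) {w \<in> units_eq r s n. orbit r s w \<subseteq> U}"
  unfolding openin_subopen[of _ "{w \<in> units_eq r s n. orbit r s w \<subseteq> U}"]
proof
  fix u assume u: "u \<in> {w \<in> units_eq r s n. orbit r s w \<subseteq> U}"
  let ?F = "orbit r s u"
  have F: "finite ?F" "card ?F = n"
    using u by (auto simp: units_eq_def)
  obtain A where A: "\<And>v. v \<in> ?F \<Longrightarrow> open (A v) \<and> v \<in> A v" "disjoint_family_on A ?F"
    using finite_disjoint_open_nbhds[OF F(1)] by blast
  define T where "T = {w \<in> range r. \<forall>v\<in>?F. orbit r s w \<inter> (A v \<inter> U) \<noteq> {}}"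
  have "openin (top_of_set (range r)) T"
    unfolding T_def using F(1) A(1) assms by (intro openin_orbits_meeting) auto
  then obtain T' where T': "open T'" "T = range r \<inter> T'"
    by (auto simp: openin_open)
  have "openin (top_of_set (units_eq r s n)) (units_eq r s n \<inter> T')"
    using T'(1) by (rule openin_open_Int)
  moreover have "u \<in> units_eq r s n \<inter> T'"
  proof -
    have "u \<in> T"
      using u A(1) by (auto simp: T_def units_eq_def)
    then show ?thesis
      using u T'(2) by blast
  qed
  moreover have "orbit r s w \<subseteq> U" if "w \<in> units_eq r s n \<inter> T'" for w
  proof -
    have "w \<in> T" "finite (orbit r s w)" "card (orbit r s w) = n"
      using that T'(2) by (auto simp: units_eq_def)
    moreover have "disjoint_family_on (\<lambda>v. A v \<inter> U) ?F"
      using A(2) by (auto simp: disjoint_family_on_def)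
    ultimately have "orbit r s w \<subseteq> \<Union> ((\<lambda>v. A v \<inter> U) ` ?F)"
      using F(2) by (intro subset_Union_if_meets_disjoint_family) (auto simp: T_def)
    then show ?thesis
      by blast
  qed
  ultimately show "\<exists>T. openin (top_of_set (units_eq r s n)) T \<and> u \<in> T
      \<and> T \<subseteq> {w \<in> units_eq r s n. orbit r s w \<subseteq> U}"
    by blast
qed

end

locale orbit_space = lc_haar_groupoid +
  fixes Q :: "'g::t2_space set topology"
  assumes quotient_map: "quotient_map (top_of_set (range r)) Q (orbit r s)"
begin

lemma openin_orbit_image:
  assumes "openin (top_of_set (range r)) {u \<in> range r. P (orbit r s u)}"
  shows "openin Q (orbit r s ` {u \<in> range r. P (orbit r s u)})"
  using quotient_map assms unfolding quotient_map_saturated_open by auto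

lemma closedin_orbit_image:
  assumes "closedin (top_of_set (range r)) {u \<in> range r. P (orbit r s u)}"
  shows "closedin Q (orbit r s ` {u \<in> range r. P (orbit r s u)})"
  using quotient_map assms unfolding quotient_map_saturated_closed by auto

lemma openin_orbit_image_units_ge: "openin Q (orbit r s ` units_ge r s n)"
  using openin_units_ge unfolding units_ge_def by (rule openin_orbit_image)

lemma closedin_orbit_image_units_le: "closedin Q (orbit r s ` units_le r s n)"
  using closedin_units_le unfolding units_le_def by (rule closedin_orbit_image)

lemma orbit_image_units_eq:
  "orbit r s ` units_eq r s n = orbit r s ` units_ge r s n \<inter> orbit r s ` units_le r s n"
  by (auto simp: units_eq_def units_ge_def units_le_def)

lemma locally_closedin_orbit_image_units_eq: "locally_closedin Q (orbit r s ` units_eq r s n)"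
  unfolding locally_closedin_def orbit_image_units_eq
  using openin_orbit_image_units_ge closedin_orbit_image_units_le by blast

lemma quotient_map_units_eq:
  "quotient_map (top_of_set (units_eq r s n)) (subtopology Q (orbit r s ` units_eq r s n)) (orbit r s)"
proof -
  let ?q = "orbit r s" and ?G = "units_ge r s n" and ?E = "units_eq r s n"
  have "quotient_map (subtopology (top_of_set (range r)) ?G) (subtopology Q (?q ` ?G)) ?q"
    using openin_orbit_image_units_ge
    by (intro quotient_map_restriction[OF quotient_map]) (auto simp: units_ge_def)
  then have quotient_G: "quotient_map (top_of_set ?G) (subtopology Q (?q ` ?G)) ?q"
    by (simp add: subtopology_subtopology units_ge_def Int_absorb1 subset_iff)
  have "closedin (subtopology Q (?q ` ?G)) (?q ` ?E)"
    unfolding closedin_subtopology orbit_image_units_eq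
    using closedin_orbit_image_units_le by blast
  then have "quotient_map (subtopology (top_of_set ?G) ?E) (subtopology (subtopology Q (?q ` ?G)) (?q ` ?E)) ?q"
    by (intro quotient_map_restriction[OF quotient_G]) (auto simp: units_ge_def units_eq_def)
  moreover have "?E \<subseteq> ?G" "?q ` ?E \<subseteq> ?q ` ?G"
    by (auto simp: units_eq_eq_Int)
  ultimately show ?thesis
    by (simp add: subtopology_subtopology Int_absorb1)
qed

lemma Hausdorff_space_orbit_image_units_eq:
  "Hausdorff_space (subtopology Q (orbit r s ` units_eq r s n))"
  unfolding Hausdorff_space_def
proof (intro allI impI)
  let ?q = "orbit r s" and ?E = "units_eq r s n"
  let ?QE = "subtopology Q (?q ` ?E)"
  fix x y assume "x \<in> topspace ?QE \<and> y \<in> topspace ?QE \<and> x \<noteq> y"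
  then obtain u v where uv: "u \<in> ?E" "v \<in> ?E" "x = ?q u" "y = ?q v" "?q u \<noteq> ?q v"
    by auto
  have "?q u \<inter> ?q v = {}"
    using orbit_eq_if_mem uv(5) by blast
  then obtain U V where UV: "open U" "open V" "?q u \<subseteq> U" "?q v \<subseteq> V" "U \<inter> V = {}"
    using separation_t2_finite uv(1,2) by (metis (lifting) mem_Collect_eq units_eq_def)
  have saturated_open: "openin ?QE (?q ` {w \<in> ?E. ?q w \<subseteq> W})" if "open W" for W
  proof -
    let ?A = "{w \<in> ?E. ?q w \<subseteq> W}"
    have "openin (top_of_set ?E) ?A"
      using openin_units_eq_orbit_subset[OF that] .
    moreover have "{w \<in> topspace (top_of_set ?E). ?q w \<in> ?q ` ?A} \<subseteq> ?A"
      by auto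
    ultimately show ?thesis
      using quotient_map_units_eq[of n] unfolding quotient_map_saturated_open by blast
  qed
  have "?q a \<noteq> ?q b" if "a \<in> ?E" "?q a \<subseteq> U" "?q b \<subseteq> V" for a b
  proof -
    have "a \<in> ?q a"
      using that(1) mem_orbit_self by (simp add: units_eq_def)
    then show ?thesis
      using that(2,3) UV(5) by blast
  qed
  then have "disjnt (?q ` {w \<in> ?E. ?q w \<subseteq> U}) (?q ` {w \<in> ?E. ?q w \<subseteq> V})"
    by (auto simp: disjnt_def)
  then show "\<exists>U V. openin ?QE U \<and> openin ?QE V \<and> x \<in> U \<and> y \<in> V \<and> disjnt U V"
    using saturated_open UV uv by blast
qed

end

theorem proposition4p6:
  fixes r s i :: "'g::{t2_space, second_countable_topology} \<Rightarrow> 'g"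
    and m :: "'g \<Rightarrow> 'g \<Rightarrow> 'g"
    and lam :: "'g \<Rightarrow> 'g measure"
    and Q :: "'g set topology"
  assumes "topological_groupoid r s m i"
    and "locally compact (UNIV :: 'g set)"
    and "haar_system r s m lam"
    and "quotient_map (top_of_set (range r)) Q (orbit r s)"
  shows "(\<forall>n::nat. closedin (top_of_set (range r)) (units_le r s n) \<and> invariant r s (units_le r s n))
       \<and> (\<forall>n::nat. openin (top_of_set (range r)) (units_ge r s n) \<and> invariant r s (units_ge r s n))
       \<and> (\<forall>n::nat. n \<ge> 1 \<longrightarrow> invariant r s (units_eq r s n)
              \<and> locally_closedin (top_of_set (range r)) (units_eq r s n)
              \<and> locally compact (units_eq r s n))
       \<and> (\<forall>n::nat. n \<ge> 1 \<longrightarrow> locally_closedin Q (orbit r s ` units_eq r s n)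
              \<and> Hausdorff_space (subtopology Q (orbit r s ` units_eq r s n)))"
proof -
  interpret orbit_space r s m i lam Q
    using assms by unfold_locales
  show ?thesis
    using closedin_units_le invariant_units_le openin_units_ge invariant_units_ge
      invariant_units_eq locally_closedin_units_eq locally_compact_units_eq
      locally_closedin_orbit_image_units_eq Hausdorff_space_orbit_image_units_eq
    by blast
qed

end
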